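(* Let $\sigma\in\operatorname{Aut}(\mathcal{H}_N')$. Then for every $\bm r\in\mathbb{Z}^N\setminus\{\bm0\}$ there exists $\bm s\in\mathbb{Z}^N\setminus\{\bm0\}$ such that $\sigma(\mathbb{K}h_{\bm r})=\mathbb{K}h_{\bm s}$ and $\sigma(\mathbb{K}h_{-\bm r})=\mathbb{K}h_{-\bm s}$.
   Context: $\mathbb{K}$ is an algebraically closed field of characteristic zero, $N=2m\ge2$ even, $(\cdot,\cdot)$ the bilinear form on $\mathbb{K}^N$ with $(e_i,e_j)=\delta_{ij}$. Let $A_N=\mathbb{K}[t_1^{\pm1},\dots,t_N^{\pm1}]$, $d_i=t_i\frac{\partial}{\partial t_i}$, $t^{\bm r}=t_1^{r_1}\cdots t_N^{r_N}$, $D(u,\bm r)=\sum_i u_it^{\bm r}d_i$. Let $\bm J=\begin{pmatrix} O_m & I_m\\ -I_m & O_m\end{pmatrix}$, $\overline{\bm r}=\bm J\bm r$, $h_{\bm r}=D(\overline{\bm r},\bm r)$ (so $h_{\bm0}=0$). $\mathcal{H}_N'=\operatorname{span}_{\mathbb{K}}\{h_{\bm r}:\bm r\in\mathbb{Z}^N\setminus\{\bm0\}\}$ is the Lie algebra with bracket $[h_{\bm r},h_{\bm s}]=(\overline{\bm r},\bm s)h_{\bm r+\bm s}$; it is $\mathbb{Z}^N$-graded with degree-$\bm r$ component $\mathbb{K}h_{\bm r}$ for $\bm r\neq\bm0$. *)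

theory Defs
  imports "HOL-Computational_Algebra.Polynomial" "HOL-Library.Function_Algebras"
begin

text \<open>Z^N with N = 2m is modelled as integer vectors nat => int supported in {0..<2m}.\<close>
definition lattice :: "nat \<Rightarrow> (nat \<Rightarrow> int) set" where
  "lattice m = {r. \<forall>i\<ge>2*m. r i = 0}"

text \<open>(J r, s) with J = [[0, I],[-I, 0]]: (J r)_i = r_(m+i), (J r)_(m+i) = - r_i for i < m.\<close>
definition Jvec :: "nat \<Rightarrow> (nat \<Rightarrow> int) \<Rightarrow> (nat \<Rightarrow> int)" where
  "Jvec m r = (\<lambda>i. if i < m then r (m + i) else if i < 2*m then - r (i - m) else 0)"

definition form :: "nat \<Rightarrow> (nat \<Rightarrow> int) \<Rightarrow> (nat \<Rightarrow> int) \<Rightarrow> int" where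
  "form m r s = (\<Sum>i<2*m. r i * s i)"

text \<open>Elements of H_N': finitely supported coefficient functions on Z^N \ {0};
  f corresponds to the sum over r of f r * h_r.\<close>
definition HN :: "nat \<Rightarrow> ((nat \<Rightarrow> int) \<Rightarrow> 'k::field) set" where
  "HN m = {f. finite {r. f r \<noteq> 0} \<and> {r. f r \<noteq> 0} \<subseteq> lattice m - {0}}"

text \<open>Bracket extended bilinearly from [h_r, h_s] = (J r, s) h_(r+s).\<close>
definition brk :: "nat \<Rightarrow> ((nat \<Rightarrow> int) \<Rightarrow> 'k::field) \<Rightarrow> ((nat \<Rightarrow> int) \<Rightarrow> 'k) \<Rightarrow> ((nat \<Rightarrow> int) \<Rightarrow> 'k)" where
  "brk m f g = (\<lambda>t. if t = 0 then 0 else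
      (\<Sum>r\<in>{r. f r \<noteq> 0}. of_int (form m (Jvec m r) (t - r)) * f r * g (t - r)))"

definition hvec :: "(nat \<Rightarrow> int) \<Rightarrow> ((nat \<Rightarrow> int) \<Rightarrow> 'k::field)" where
  "hvec r = (\<lambda>s. if s = r then 1 else 0)"

definition line :: "(nat \<Rightarrow> int) \<Rightarrow> ((nat \<Rightarrow> int) \<Rightarrow> 'k::field) set" where
  "line r = {(\<lambda>s. c * hvec r s) | c. True}"

definition is_aut :: "nat \<Rightarrow> (((nat \<Rightarrow> int) \<Rightarrow> 'k::field) \<Rightarrow> ((nat \<Rightarrow> int) \<Rightarrow> 'k)) \<Rightarrow> bool" where
  "is_aut m \<sigma> \<longleftrightarrow> bij_betw \<sigma> (HN m) (HN m)
     \<and> (\<forall>f\<in>HN m. \<forall>g\<in>HN m. \<sigma> (f + g) = \<sigma> f + \<sigma> g)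
     \<and> (\<forall>c. \<forall>f\<in>HN m. \<sigma> (\<lambda>s. c * f s) = (\<lambda>s. c * \<sigma> f s))
     \<and> (\<forall>f\<in>HN m. \<forall>g\<in>HN m. \<sigma> (brk m f g) = brk m (\<sigma> f) (\<sigma> g))"

end

theory Submission
  imports Defs
begin

text \<open>
  The operator ad h_r ad h_-r is diagonal on the basis (h_t has eigenvalue -(J r, t)^2), so every
  element is killed by some product of factors ad h_r ad h_-r - c.  An automorphism sigma
  transports this to T = ad z ad z', where z = sigma h_r and z' = sigma h_-r.  Take a total order
  on Z^N compatible with addition and let A, B be the leading degrees of z, z'.  If A + B > 0, then
  for a suitable h_v each factor T - c raises the leading degree by A + B while keeping the leading
  coefficient nonzero, so no product of such factors kills h_v.  Hence A + B <= 0 for the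
  lexicographic order, and dually the lowest degrees of z, z' have nonnegative sum.  Squeezed
  between these bounds, z and z' are monomials of opposite degrees.
\<close>

lemma add_in_lattice: "a \<in> lattice m \<Longrightarrow> b \<in> lattice m \<Longrightarrow> a + b \<in> lattice m"
  by (simp add: lattice_def)

lemma uminus_in_lattice: "a \<in> lattice m \<Longrightarrow> - a \<in> lattice m"
  by (simp add: lattice_def)

definition sform :: "nat \<Rightarrow> (nat \<Rightarrow> int) \<Rightarrow> (nat \<Rightarrow> int) \<Rightarrow> int" where
  "sform m a b = form m (Jvec m a) b"

lemma sum_lessThan_double:
  fixes f :: "nat \<Rightarrow> 'a::comm_monoid_add"
  shows "(\<Sum>i<2 * n. f i) = (\<Sum>i<n. f i) + (\<Sum>i<n. f (n + i))"
proof -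
  have "(\<Sum>i<2 * n. f i) = sum f {0..<n} + sum f {n..<n + n}"
    by (simp add: mult_2 lessThan_atLeast0 sum.atLeastLessThan_concat)
  also have "sum f {n..<n + n} = (\<Sum>i<n. f (n + i))"
    using sum.shift_bounds_nat_ivl[of f 0 n n] by (simp add: add.commute lessThan_atLeast0)
  finally show ?thesis by (simp add: lessThan_atLeast0)
qed

lemma sform_expand: "sform m a b = (\<Sum>i<m. a (m + i) * b i) - (\<Sum>i<m. a i * b (m + i))"
  unfolding sform_def form_def sum_lessThan_double Jvec_def by (simp add: sum_negf)

lemma sform_add_right: "sform m a (b + c) = sform m a b + sform m a c"
  by (simp add: sform_expand sum.distrib algebra_simps)

lemma sform_diff_right: "sform m a (b - c) = sform m a b - sform m a c"
  by (simp add: sform_expand sum_subtractf algebra_simps)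

lemma sform_minus_left: "sform m (- a) b = - sform m a b"
  by (simp add: sform_expand sum_negf)

lemma sform_minus_right: "sform m a (- b) = - sform m a b"
  by (simp add: sform_expand sum_negf)

lemma sform_zero_right: "sform m a 0 = 0"
  by (simp add: sform_expand)

lemma sform_antisym: "sform m a b = - sform m b a"
  by (simp add: sform_expand mult.commute)

lemma sform_self: "sform m a a = 0"
  using sform_antisym[of m a a] by simp

lemma sform_unit_vector:
  assumes "i < 2 * m"
  shows "sform m a (\<lambda>j. if j = i then 1 else 0) = Jvec m a i"
  using assms by (simp add: sform_def form_def if_distrib[of "\<lambda>x. _ * x"] cong: if_cong)

lemma Jvec_nonzero:
  assumes "a \<in> lattice m - {0}"
  obtains i where "i < 2 * m" "Jvec m a i \<noteq> 0"
proof -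
  obtain k where k: "a k \<noteq> 0" using assms by (auto simp: fun_eq_iff)
  then have "k < 2 * m" using assms by (auto simp: lattice_def not_less[symmetric])
  show thesis
  proof (cases "k < m")
    case True
    then show thesis using k by (intro that[of "k + m"]) (auto simp: Jvec_def)
  next
    case False
    then show thesis using k \<open>k < 2 * m\<close> by (intro that[of "k - m"]) (auto simp: Jvec_def)
  qed
qed

lemma exists_sform_both_nonzero:
  assumes a: "a \<in> lattice m - {0}" and b: "b \<in> lattice m - {0}"
  shows "\<exists>v\<in>lattice m - {0}. sform m a v \<noteq> 0 \<and> sform m b v \<noteq> 0"
proof -
  define e :: "nat \<Rightarrow> nat \<Rightarrow> int" where "e i = (\<lambda>j. if j = i then 1 else 0)" for i
  have e_lattice: "i < 2 * m \<Longrightarrow> e i \<in> lattice m" for i by (simp add: e_def lattice_def)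
  have sform_e: "i < 2 * m \<Longrightarrow> sform m c (e i) = Jvec m c i" for i c
    unfolding e_def by (rule sform_unit_vector)
  have nonzero: "sform m a v \<noteq> 0 \<Longrightarrow> v \<noteq> 0" for v by (auto simp: sform_zero_right)
  obtain i where i: "i < 2 * m" "Jvec m a i \<noteq> 0" using Jvec_nonzero[OF a] .
  obtain j where j: "j < 2 * m" "Jvec m b j \<noteq> 0" using Jvec_nonzero[OF b] .
  consider "Jvec m b i \<noteq> 0" | "Jvec m a j \<noteq> 0" | "Jvec m b i = 0" "Jvec m a j = 0" by blast
  then show ?thesis
  proof cases
    case 1
    then show ?thesis using i e_lattice sform_e nonzero by (intro bexI[of _ "e i"]) auto
  next
    case 2
    then show ?thesis using j e_lattice sform_e nonzero by (intro bexI[of _ "e j"]) auto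
  next
    case 3
    have "sform m a (e i + e j) = Jvec m a i" "sform m b (e i + e j) = Jvec m b j"
      using sform_e i j 3 by (simp_all add: sform_add_right)
    moreover have "e i + e j \<in> lattice m" using e_lattice i j by (simp add: add_in_lattice)
    ultimately show ?thesis using i j nonzero by (intro bexI[of _ "e i + e j"]) auto
  qed
qed

lemma nonzero_same_sign_add:
  fixes x g :: int
  assumes "x \<noteq> 0" "0 \<le> x * g"
  shows "x + g \<noteq> 0" "0 \<le> (x + g) * g"
proof -
  show "0 \<le> (x + g) * g" using assms by (simp add: distrib_right)
  show "x + g \<noteq> 0"
  proof
    assume "x + g = 0"
    then have "x * g = - (x * x)" by (simp add: add_eq_0_iff)
    moreover have "0 < x * x" using assms(1) by (auto simp: zero_less_mult_iff linorder_neq_iff)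
    ultimately show False using assms(2) by linarith
  qed
qed

text \<open>If lead y = u, the leading coefficient of [z, [z', y]] carries the factors
  sform m B u and sform m A (B + u), where A, B are the leading degrees of z, z'.  Passing from u
  to u + A + B changes them by + sform m B A and - sform m B A, so this sign condition keeps
  both nonzero forever.\<close>
definition shift_sign_condition ::
    "nat \<Rightarrow> (nat \<Rightarrow> int) \<Rightarrow> (nat \<Rightarrow> int) \<Rightarrow> (nat \<Rightarrow> int) \<Rightarrow> bool" where
  "shift_sign_condition m A B u \<longleftrightarrow>
     sform m B u \<noteq> 0 \<and> 0 \<le> sform m B u * sform m B A \<and>
     sform m A (B + u) \<noteq> 0 \<and> sform m A (B + u) * sform m B A \<le> 0"

lemma shift_sign_condition_shift:
  assumes "shift_sign_condition m A B u"
  shows "shift_sign_condition m A B (A + B + u)"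
proof -
  define \<gamma> x y where "\<gamma> = sform m B A" and "x = sform m B u" and "y = - sform m A (B + u)"
  have "sform m B (A + B + u) = x + \<gamma>" "sform m A (B + (A + B + u)) = - (y + \<gamma>)"
    using sform_antisym[of m A B] unfolding \<gamma>_def x_def y_def
    by (simp_all only: sform_add_right sform_self)
  moreover have "x + \<gamma> \<noteq> 0" "0 \<le> (x + \<gamma>) * \<gamma>" "y + \<gamma> \<noteq> 0" "0 \<le> (y + \<gamma>) * \<gamma>"
    using assms nonzero_same_sign_add[of x \<gamma>] nonzero_same_sign_add[of y \<gamma>]
    unfolding shift_sign_condition_def \<gamma>_def x_def y_def by simp_all
  ultimately show ?thesis unfolding shift_sign_condition_def \<gamma>_def
    by (metis minus_mult_left neg_le_0_iff_le neg_equal_0_iff_equal)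
qed

lemma exists_shift_sign_condition:
  assumes A: "A \<in> lattice m - {0}" and B: "B \<in> lattice m - {0}"
  shows "\<exists>v\<in>lattice m - {0}. shift_sign_condition m A B v"
proof -
  define \<gamma> where "\<gamma> = sform m B A"
  have shift_A: "sform m A (B + u) = sform m A u - \<gamma>" for u
    using sform_antisym[of m A B] by (simp add: sform_add_right \<gamma>_def)
  show ?thesis
  proof (cases "\<gamma> = 0")
    case True
    then show ?thesis
      using exists_sform_both_nonzero[OF B A] shift_A
      unfolding shift_sign_condition_def \<gamma>_def by auto
  next
    case False
    then show ?thesis
      using A shift_A unfolding shift_sign_condition_def \<gamma>_def
      by (intro bexI[of _ A]) (auto simp: sform_self)
  qed
qed

definition supp :: "('a \<Rightarrow> 'b::zero) \<Rightarrow> 'a set" where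
  "supp f = {x. f x \<noteq> 0}"

lemma supp_eq_empty_iff: "supp f = {} \<longleftrightarrow> f = 0"
  by (auto simp: supp_def fun_eq_iff)

lemma HN_iff: "f \<in> HN m \<longleftrightarrow> finite (supp f) \<and> supp f \<subseteq> lattice m - {0}"
  by (simp add: HN_def supp_def)

lemma zero_in_HN: "0 \<in> HN m"
  by (simp add: HN_iff supp_def)

lemma plus_in_HN: "f \<in> HN m \<Longrightarrow> g \<in> HN m \<Longrightarrow> f + g \<in> HN m"
proof -
  have "supp (f + g) \<subseteq> supp f \<union> supp g" by (auto simp: supp_def)
  then show "f \<in> HN m \<Longrightarrow> g \<in> HN m \<Longrightarrow> f + g \<in> HN m"
    unfolding HN_iff by (meson finite_Un finite_subset le_sup_iff subset_trans)
qed

lemma scale_in_HN: "f \<in> HN m \<Longrightarrow> (\<lambda>s. c * f s) \<in> HN m"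
proof -
  have "supp (\<lambda>s. c * f s) \<subseteq> supp f" by (auto simp: supp_def)
  then show "f \<in> HN m \<Longrightarrow> (\<lambda>s. c * f s) \<in> HN m"
    unfolding HN_iff by (meson finite_subset subset_trans)
qed

lemma supp_hvec [simp]: "supp (hvec r :: _ \<Rightarrow> 'k::field) = {r}"
  by (auto simp: supp_def hvec_def)

lemma hvec_nonzero: "(hvec r :: _ \<Rightarrow> 'k::field) \<noteq> 0"
  using supp_hvec[of r] supp_eq_empty_iff by (metis insert_not_empty)

lemma hvec_in_HN: "r \<in> lattice m - {0} \<Longrightarrow> (hvec r :: _ \<Rightarrow> 'k::field) \<in> HN m"
  by (simp add: HN_iff)

lemma brk_apply:
  "brk m f g t = (if t = 0 then 0 else
     (\<Sum>r\<in>supp f. of_int (sform m r (t - r)) * f r * g (t - r)))"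
  by (simp add: brk_def sform_def supp_def)

lemma brk_nonzeroD:
  assumes "brk m f g t \<noteq> 0"
  shows "t \<noteq> 0" and "\<exists>r. f r \<noteq> 0 \<and> g (t - r) \<noteq> 0"
proof -
  show "t \<noteq> 0" using assms by (auto simp: brk_apply)
  then have "(\<Sum>r\<in>supp f. of_int (sform m r (t - r)) * f r * g (t - r)) \<noteq> 0"
    using assms by (simp add: brk_apply)
  then obtain r where "r \<in> supp f" "of_int (sform m r (t - r)) * f r * g (t - r) \<noteq> 0"
    by (meson sum.neutral)
  then show "\<exists>r. f r \<noteq> 0 \<and> g (t - r) \<noteq> 0" by (auto simp: supp_def)
qed

lemma supp_brk_subset: "supp (brk m f g) \<subseteq> (\<lambda>(a, b). a + b) ` (supp f \<times> supp g)"
proof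
  fix t assume "t \<in> supp (brk m f g)"
  then obtain r where "f r \<noteq> 0" "g (t - r) \<noteq> 0"
    using brk_nonzeroD(2)[of m f g t] by (auto simp: supp_def)
  then have "(r, t - r) \<in> supp f \<times> supp g" by (simp add: supp_def)
  then show "t \<in> (\<lambda>(a, b). a + b) ` (supp f \<times> supp g)" by force
qed

lemma finite_supp_brk: "finite (supp f) \<Longrightarrow> finite (supp g) \<Longrightarrow> finite (supp (brk m f g))"
  by (rule finite_subset[OF supp_brk_subset]) auto

lemma brk_in_HN:
  assumes "f \<in> HN m" "g \<in> HN m"
  shows "brk m f g \<in> HN m"
proof -
  have "t \<in> lattice m - {0}" if "t \<in> supp (brk m f g)" for t
  proof -
    obtain a b where "a \<in> supp f" "b \<in> supp g" "t = a + b"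
      using supp_brk_subset[of m f g] \<open>t \<in> supp (brk m f g)\<close> by fastforce
    then have "t \<in> lattice m" using assms add_in_lattice unfolding HN_iff by blast
    moreover have "t \<noteq> 0" using that brk_nonzeroD(1) by (auto simp: supp_def)
    ultimately show ?thesis by simp
  qed
  then show ?thesis using assms finite_supp_brk by (auto simp: HN_iff)
qed

lemma brk_hvec_left:
  "brk m (hvec a :: _ \<Rightarrow> 'k::field) w t =
     (if t = 0 then 0 else of_int (sform m a (t - a)) * w (t - a))"
  by (simp add: brk_apply) (simp add: hvec_def)

lemma brk_hvec_hvec_uminus:
  fixes w :: "(nat \<Rightarrow> int) \<Rightarrow> 'k::field"
  shows "brk m (hvec r) (brk m (hvec (- r)) w) = (\<lambda>t. - (of_int (sform m r t) ^ 2) * w t)"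
proof
  fix t
  show "brk m (hvec r) (brk m (hvec (- r)) w) t = - (of_int (sform m r t) ^ 2) * w t"
  proof (cases "t = 0 \<or> t = r")
    case True
    then show ?thesis by (auto simp: brk_hvec_left sform_zero_right sform_self)
  next
    case False
    then show ?thesis
      by (simp add: brk_hvec_left sform_diff_right sform_self sform_minus_left power2_eq_square)
  qed
qed

text \<open>split_annihilated T y: some product (T - c1) ... (T - cn) kills y,
  i.e. y lies in a finite sum of generalised eigenspaces of T.\<close>
inductive split_annihilated :: "(('i \<Rightarrow> 'k) \<Rightarrow> ('i \<Rightarrow> 'k)) \<Rightarrow> ('i \<Rightarrow> 'k::field) \<Rightarrow> bool"
  for T where
  zero: "split_annihilated T 0"
| shift: "split_annihilated T (\<lambda>s. T y s - c * y s) \<Longrightarrow> split_annihilated T y"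

lemma split_annihilated_diagonal:
  assumes T: "\<And>w. T w = (\<lambda>t. \<mu> t * w t)" and "finite (supp y)"
  shows "split_annihilated T y"
proof -
  have "supp y \<subseteq> S \<Longrightarrow> split_annihilated T y" if "finite S" for S
    using that
  proof (induction S arbitrary: y rule: finite_induct)
    case empty
    then show ?case by (metis subset_empty supp_eq_empty_iff split_annihilated.zero)
  next
    case (insert a S)
    have "supp (\<lambda>s. T y s - \<mu> a * y s) \<subseteq> S"
      using insert.prems by (auto simp: supp_def T algebra_simps)
    then show ?case using insert.IH split_annihilated.shift by blast
  qed
  then show ?thesis using assms(2) by blast
qed

lemma split_annihilated_transfer:
  assumes "split_annihilated T w" "w \<in> V"
    and T_closed: "\<And>v. v \<in> V \<Longrightarrow> T v \<in> V"
    and add_closed: "\<And>u v. u \<in> V \<Longrightarrow> v \<in> V \<Longrightarrow> u + v \<in> V"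
    and scale_closed: "\<And>c v. v \<in> V \<Longrightarrow> (\<lambda>s. c * v s) \<in> V"
    and additive: "\<And>u v. u \<in> V \<Longrightarrow> v \<in> V \<Longrightarrow> \<sigma> (u + v) = \<sigma> u + \<sigma> v"
    and homogeneous: "\<And>c v. v \<in> V \<Longrightarrow> \<sigma> (\<lambda>s. c * v s) = (\<lambda>s. c * \<sigma> v s)"
    and intertwine: "\<And>v. v \<in> V \<Longrightarrow> \<sigma> (T v) = T' (\<sigma> v)"
  shows "split_annihilated T' (\<sigma> w)"
  using assms(1,2)
proof (induction rule: split_annihilated.induct)
  case zero
  then have "\<sigma> (\<lambda>s. 0 * 0 s) = (\<lambda>s. 0 * \<sigma> 0 s)" using homogeneous by blast
  then show ?case using split_annihilated.zero[of T'] by (simp add: zero_fun_def)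
next
  case (shift y c)
  have split: "(\<lambda>s. T y s - c * y s) = T y + (\<lambda>s. (- c) * y s)" by (simp add: fun_eq_iff)
  have "\<sigma> (\<lambda>s. T y s - c * y s) = \<sigma> (T y) + \<sigma> (\<lambda>s. (- c) * y s)"
    unfolding split using additive[OF T_closed scale_closed] shift.prems by blast
  also have "\<dots> = T' (\<sigma> y) + (\<lambda>s. (- c) * \<sigma> y s)"
    by (simp only: intertwine[OF shift.prems] homogeneous[OF shift.prems])
  also have "\<dots> = (\<lambda>s. T' (\<sigma> y) s - c * \<sigma> y s)" by (simp add: fun_eq_iff)
  finally have "\<sigma> (\<lambda>s. T y s - c * y s) = (\<lambda>s. T' (\<sigma> y) s - c * \<sigma> y s)" .
  moreover have "(\<lambda>s. T y s - c * y s) \<in> V"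
    unfolding split using shift.prems T_closed scale_closed add_closed by blast
  ultimately show ?case using shift.IH split_annihilated.shift by metis
qed

locale translation_order = ord: linorder less_eq less
  for less_eq :: "(nat \<Rightarrow> int) \<Rightarrow> (nat \<Rightarrow> int) \<Rightarrow> bool" (infix \<open>\<preceq>\<close> 50)
    and less :: "(nat \<Rightarrow> int) \<Rightarrow> (nat \<Rightarrow> int) \<Rightarrow> bool" (infix \<open>\<prec>\<close> 50) +
  assumes add_right_strict_mono: "a \<prec> b \<Longrightarrow> a + c \<prec> b + c"
begin

lemma add_right_mono: "a \<preceq> b \<Longrightarrow> a + c \<preceq> b + c"
  using add_right_strict_mono by (auto simp: ord.le_less)

lemma add_left_mono: "a \<preceq> b \<Longrightarrow> c + a \<preceq> c + b"
  using add_right_mono by (simp add: add.commute)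

lemma add_left_strict_mono: "a \<prec> b \<Longrightarrow> c + a \<prec> c + b"
  using add_right_strict_mono by (simp add: add.commute)

lemma add_mono: "a \<preceq> b \<Longrightarrow> c \<preceq> d \<Longrightarrow> a + c \<preceq> b + d"
  using add_right_mono add_left_mono ord.order_trans by blast

lemma add_less_le_mono: "a \<prec> b \<Longrightarrow> c \<preceq> d \<Longrightarrow> a + c \<prec> b + d"
  using add_right_strict_mono add_left_mono ord.less_le_trans by blast

lemma add_le_less_mono: "a \<preceq> b \<Longrightarrow> c \<prec> d \<Longrightarrow> a + c \<prec> b + d"
  using add_right_mono add_left_strict_mono ord.le_less_trans by blast

lemma singletons_if_extremes_cancel:
  assumes S: "a \<in> S" "b \<in> S" "\<forall>t\<in>S. b \<preceq> t \<and> t \<preceq> a"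
    and S': "a' \<in> S'" "b' \<in> S'" "\<forall>t\<in>S'. b' \<preceq> t \<and> t \<preceq> a'"
    and top: "a + a' \<preceq> 0" and bottom: "0 \<preceq> b + b'"
  shows "S = {a}" "S' = {- a}"
proof -
  have "b \<preceq> a" "b' \<preceq> a'" using S S' by blast+
  have no_gap: "\<not> b + b' \<prec> a + a'"
    using top bottom ord.less_le_trans ord.less_irrefl by blast
  have "b = a" using add_less_le_mono[OF _ \<open>b' \<preceq> a'\<close>] no_gap \<open>b \<preceq> a\<close> ord.le_less by blast
  moreover have "b' = a'" using add_le_less_mono[OF \<open>b \<preceq> a\<close>] no_gap \<open>b' \<preceq> a'\<close> ord.le_less by blast
  ultimately have "a + a' = 0" using top bottom ord.order_antisym by simp
  then have "a' = - a" by (simp add: eq_neg_iff_add_eq_0 add.commute)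
  show "S = {a}" "S' = {- a}"
    using S S' \<open>b = a\<close> \<open>b' = a'\<close> \<open>a' = - a\<close> ord.order_antisym by blast+
qed

definition lead :: "((nat \<Rightarrow> int) \<Rightarrow> 'k::zero) \<Rightarrow> nat \<Rightarrow> int" where
  "lead f = ord.Max (supp f)"

lemma lead_in_supp: "finite (supp f) \<Longrightarrow> f \<noteq> 0 \<Longrightarrow> lead f \<in> supp f"
  by (simp add: lead_def ord.Max_in supp_eq_empty_iff)

lemma le_lead: "finite (supp f) \<Longrightarrow> f t \<noteq> 0 \<Longrightarrow> t \<preceq> lead f"
  by (simp add: lead_def ord.Max_ge supp_def)

lemma lead_eqI: "finite (supp f) \<Longrightarrow> f v \<noteq> 0 \<Longrightarrow> (\<And>t. f t \<noteq> 0 \<Longrightarrow> t \<preceq> v) \<Longrightarrow> lead f = v"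
  unfolding lead_def by (rule ord.Max_eqI) (auto simp: supp_def)

lemma lead_hvec: "lead (hvec v :: _ \<Rightarrow> 'k::field) = v"
  by (simp add: lead_def)

lemma brk_nonzero_le_lead:
  assumes "finite (supp x)" "finite (supp y)" "brk m x y t \<noteq> 0"
  shows "t \<preceq> lead x + lead y"
proof -
  obtain r where "x r \<noteq> 0" "y (t - r) \<noteq> 0" using brk_nonzeroD(2)[OF assms(3)] by blast
  then have "r + (t - r) \<preceq> lead x + lead y"
    using add_mono le_lead[OF assms(1)] le_lead[OF assms(2)] by blast
  then show ?thesis by simp
qed

lemma brk_at_lead_add:
  assumes fin: "finite (supp x)" "finite (supp y)" and "x \<noteq> 0"
  shows "brk m x y (lead x + lead y) = of_int (sform m (lead x) (lead y)) * x (lead x) * y (lead y)"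
proof (cases "lead x + lead y = 0")
  case True
  then have "lead y = - lead x" by (simp add: add_eq_0_iff)
  then show ?thesis using True by (simp add: brk_apply sform_minus_right sform_self)
next
  case False
  let ?A = "lead x" and ?B = "lead y"
  have "y (?A + ?B - r) = 0" if "r \<in> supp x - {?A}" for r
  proof -
    have "r \<prec> ?A" using that le_lead[OF fin(1)] by (auto simp: supp_def ord.le_less)
    then have "?B \<prec> ?A + ?B - r"
      using add_right_strict_mono[of r ?A "?B - r"] by (simp add: add_diff_eq)
    then show ?thesis using le_lead[OF fin(2)] ord.leD by blast
  qed
  then have "(\<Sum>r\<in>supp x - {?A}. of_int (sform m r (?A + ?B - r)) * x r * y (?A + ?B - r)) = 0"
    by simp
  moreover have "?A \<in> supp x" using lead_in_supp fin \<open>x \<noteq> 0\<close> by blast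
  ultimately show ?thesis using False fin by (simp add: brk_apply sum.remove)
qed

lemma lead_brk:
  fixes x y :: "(nat \<Rightarrow> int) \<Rightarrow> 'k::field_char_0"
  assumes fin: "finite (supp x)" "finite (supp y)" and nz: "x \<noteq> 0" "y \<noteq> 0"
    and "sform m (lead x) (lead y) \<noteq> 0"
  shows "brk m x y (lead x + lead y) \<noteq> 0" "lead (brk m x y) = lead x + lead y"
proof -
  have "x (lead x) \<noteq> 0" "y (lead y) \<noteq> 0" using lead_in_supp fin nz by (auto simp: supp_def)
  then show "brk m x y (lead x + lead y) \<noteq> 0" using brk_at_lead_add[OF fin nz(1)] assms(5) by simp
  then show "lead (brk m x y) = lead x + lead y"
    using lead_eqI finite_supp_brk[OF fin] brk_nonzero_le_lead[OF fin] by blast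
qed

lemma lead_ad_ad_shift:
  fixes z z' y :: "(nat \<Rightarrow> int) \<Rightarrow> 'k::field_char_0" and c :: 'k
  assumes fin: "finite (supp z)" "finite (supp z')" "finite (supp y)"
    and nz: "z \<noteq> 0" "z' \<noteq> 0" "y \<noteq> 0"
    and pos: "0 \<prec> lead z + lead z'"
    and "sform m (lead z') (lead y) \<noteq> 0" "sform m (lead z) (lead z' + lead y) \<noteq> 0"
  defines "y' \<equiv> \<lambda>t. brk m z (brk m z' y) t - c * y t"
  shows "finite (supp y')" "y' \<noteq> 0" "lead y' = lead z + lead z' + lead y"
proof -
  define g where "g = brk m z' y"
  define w where "w = lead z + lead z' + lead y"
  have fin_g: "finite (supp g)" using finite_supp_brk fin g_def by blast
  have "g (lead z' + lead y) \<noteq> 0" "lead g = lead z' + lead y"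
    using lead_brk[OF fin(2,3) nz(2,3)] assms(8) g_def by blast+
  then have "g \<noteq> 0" by auto
  then have top: "brk m z g w \<noteq> 0" "lead (brk m z g) = w"
    using lead_brk[OF fin(1) fin_g nz(1)] assms(9) \<open>lead g = _\<close> by (simp_all add: w_def add.assoc)
  have "lead y \<prec> w" using add_right_strict_mono[OF pos, of "lead y"] by (simp add: w_def)
  then have "y w = 0" using le_lead[OF fin(3)] ord.leD by blast
  have supp_y': "supp y' \<subseteq> supp (brk m z g) \<union> supp y" by (auto simp: supp_def y'_def g_def)
  then show "finite (supp y')" using finite_supp_brk[OF fin(1) fin_g] fin(3) finite_subset by blast
  moreover have "y' w \<noteq> 0" using top \<open>y w = 0\<close> by (simp add: y'_def g_def)
  moreover have "t \<preceq> w" if "y' t \<noteq> 0" for t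
  proof -
    have "brk m z g t \<noteq> 0 \<or> y t \<noteq> 0" using that supp_y' by (auto simp: supp_def)
    then show ?thesis
    proof
      assume "brk m z g t \<noteq> 0"
      then show ?thesis using le_lead[OF finite_supp_brk[OF fin(1) fin_g]] top(2) by metis
    next
      assume "y t \<noteq> 0"
      then show ?thesis
        using le_lead[OF fin(3)] \<open>lead y \<prec> w\<close> ord.le_less_trans ord.less_imp_le by blast
    qed
  qed
  ultimately show "y' \<noteq> 0" "lead y' = lead z + lead z' + lead y"
    using lead_eqI unfolding w_def by auto
qed

lemma not_split_annihilated_hvec:
  fixes z z' :: "(nat \<Rightarrow> int) \<Rightarrow> 'k::field_char_0"
  assumes fin: "finite (supp z)" "finite (supp z')" and nz: "z \<noteq> 0" "z' \<noteq> 0"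
    and pos: "0 \<prec> lead z + lead z'"
    and v: "shift_sign_condition m (lead z) (lead z') v"
  shows "\<not> split_annihilated (\<lambda>y. brk m z (brk m z' y)) (hvec v)"
proof
  have never: "False" if "split_annihilated (\<lambda>y. brk m z (brk m z' y)) y" "finite (supp y)"
    "y \<noteq> 0" "shift_sign_condition m (lead z) (lead z') (lead y)" for y
    using that
  proof (induction rule: split_annihilated.induct)
    case zero
    then show ?case by simp
  next
    case (shift y c)
    let ?y' = "\<lambda>t. brk m z (brk m z' y) t - c * y t"
    have "finite (supp ?y')" "?y' \<noteq> 0" "lead ?y' = lead z + lead z' + lead y"
      using lead_ad_ad_shift[OF fin shift.prems(1) nz shift.prems(2) pos, of m c] shift.prems(3)
      unfolding shift_sign_condition_def by blast+
    moreover have "shift_sign_condition m (lead z) (lead z') (lead z + lead z' + lead y)"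
      using shift_sign_condition_shift shift.prems(3) .
    ultimately show ?case using shift.IH by metis
  qed
  assume "split_annihilated (\<lambda>y. brk m z (brk m z' y)) (hvec v)"
  then show False using never[OF _ _ hvec_nonzero] v by (simp add: lead_hvec)
qed

lemma lead_add_lead_nonpos:
  fixes z z' :: "(nat \<Rightarrow> int) \<Rightarrow> 'k::field_char_0"
  assumes HN: "z \<in> HN m" "z' \<in> HN m" and nz: "z \<noteq> 0" "z' \<noteq> 0"
    and split: "\<forall>v\<in>lattice m - {0}. split_annihilated (\<lambda>y. brk m z (brk m z' y)) (hvec v)"
  shows "lead z + lead z' \<preceq> 0"
proof (rule ccontr)
  assume "\<not> lead z + lead z' \<preceq> 0"
  then have pos: "0 \<prec> lead z + lead z'" by (simp add: ord.not_le)
  have fin: "finite (supp z)" "finite (supp z')" using HN by (simp_all add: HN_iff)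
  have "lead z \<in> lattice m - {0}" "lead z' \<in> lattice m - {0}"
    using HN lead_in_supp[OF fin(1) nz(1)] lead_in_supp[OF fin(2) nz(2)] by (auto simp: HN_iff)
  then obtain v where "v \<in> lattice m - {0}" "shift_sign_condition m (lead z) (lead z') v"
    using exists_shift_sign_condition by blast
  then show False using not_split_annihilated_hvec[OF fin nz pos] split by blast
qed

end

definition lex_less :: "(nat \<Rightarrow> int) \<Rightarrow> (nat \<Rightarrow> int) \<Rightarrow> bool" where
  "lex_less a b \<longleftrightarrow> (\<exists>i. a i < b i \<and> (\<forall>j<i. a j = b j))"

definition lex_le :: "(nat \<Rightarrow> int) \<Rightarrow> (nat \<Rightarrow> int) \<Rightarrow> bool" where
  "lex_le a b \<longleftrightarrow> a = b \<or> lex_less a b"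

lemma lex_less_irrefl: "\<not> lex_less a a"
  by (simp add: lex_less_def)

lemma lex_less_trans:
  assumes "lex_less a b" "lex_less b c"
  shows "lex_less a c"
proof -
  obtain i where i: "a i < b i" "\<forall>j<i. a j = b j" using assms(1) lex_less_def by blast
  obtain k where k: "b k < c k" "\<forall>j<k. b j = c j" using assms(2) lex_less_def by blast
  show ?thesis
  proof (cases "i \<le> k")
    case True
    then show ?thesis unfolding lex_less_def using i k by (intro exI[of _ i]) (auto simp: le_less)
  next
    case False
    then show ?thesis unfolding lex_less_def using i k by (intro exI[of _ k]) auto
  qed
qed

lemma lex_less_asym: "lex_less a b \<Longrightarrow> \<not> lex_less b a"
  using lex_less_trans[of a b a] lex_less_irrefl[of a] by blast

lemma lex_less_total:
  assumes "a \<noteq> b"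
  shows "lex_less a b \<or> lex_less b a"
proof -
  define k where "k = (LEAST i. a i \<noteq> b i)"
  obtain i where "a i \<noteq> b i" using assms by (auto simp: fun_eq_iff)
  then have "a k \<noteq> b k" unfolding k_def by (rule LeastI)
  have below: "\<forall>j<k. a j = b j" unfolding k_def using not_less_Least by blast
  consider "a k < b k" | "b k < a k" using \<open>a k \<noteq> b k\<close> by linarith
  then show ?thesis
  proof cases
    case 1
    then show ?thesis using below unfolding lex_less_def by blast
  next
    case 2
    then show ?thesis using below unfolding lex_less_def by (intro disjI2 exI[of _ k]) simp
  qed
qed

lemma translation_order_lex: "translation_order lex_le lex_less"
proof unfold_locales
  fix a b c :: "nat \<Rightarrow> int"
  show "lex_less a b \<longleftrightarrow> lex_le a b \<and> \<not> lex_le b a"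
    using lex_less_asym lex_less_irrefl by (auto simp: lex_le_def)
  show "lex_le a a" by (simp add: lex_le_def)
  show "lex_le a b \<Longrightarrow> lex_le b c \<Longrightarrow> lex_le a c"
    using lex_less_trans by (auto simp: lex_le_def)
  show "lex_le a b \<Longrightarrow> lex_le b a \<Longrightarrow> a = b"
    using lex_less_asym by (auto simp: lex_le_def)
  show "lex_le a b \<or> lex_le b a"
    using lex_less_total by (auto simp: lex_le_def)
  show "lex_less a b \<Longrightarrow> lex_less (a + c) (b + c)"
    by (simp add: lex_less_def)
qed

lemma translation_order_dual:
  assumes "translation_order le lt"
  shows "translation_order (\<lambda>a b. le b a) (\<lambda>a b. lt b a)"
proof -
  interpret translation_order le lt by (rule assms)
  show ?thesis
    unfolding translation_order_def translation_order_axioms_def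
    using ord.dual_linorder add_right_strict_mono by blast
qed

interpretation lex: translation_order lex_le lex_less
  by (rule translation_order_lex)

interpretation dual_lex: translation_order "\<lambda>a b. lex_le b a" "\<lambda>a b. lex_less b a"
  by (rule translation_order_dual[OF translation_order_lex])

lemma ad_ad_split_annihilated_imp_opposite_monomials:
  fixes z z' :: "(nat \<Rightarrow> int) \<Rightarrow> 'k::field_char_0"
  assumes HN: "z \<in> HN m" "z' \<in> HN m" and nz: "z \<noteq> 0" "z' \<noteq> 0"
    and split: "\<forall>v\<in>lattice m - {0}. split_annihilated (\<lambda>y. brk m z (brk m z' y)) (hvec v)"
  shows "\<exists>a. supp z = {a} \<and> supp z' = {- a}"
proof -
  have fin: "finite (supp z)" "finite (supp z')" using HN by (simp_all add: HN_iff)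
  have in_supp: "lex.lead z \<in> supp z" "dual_lex.lead z \<in> supp z"
    "lex.lead z' \<in> supp z'" "dual_lex.lead z' \<in> supp z'"
    using lex.lead_in_supp dual_lex.lead_in_supp fin nz by blast+
  have bounds: "\<forall>t\<in>supp z. lex_le (dual_lex.lead z) t \<and> lex_le t (lex.lead z)"
    "\<forall>t\<in>supp z'. lex_le (dual_lex.lead z') t \<and> lex_le t (lex.lead z')"
    using lex.le_lead dual_lex.le_lead fin by (auto simp: supp_def)
  have "lex_le (lex.lead z + lex.lead z') 0" "lex_le 0 (dual_lex.lead z + dual_lex.lead z')"
    using lex.lead_add_lead_nonpos[OF assms] dual_lex.lead_add_lead_nonpos[OF assms] by simp_all
  then show ?thesis
    using lex.singletons_if_extremes_cancel[OF in_supp(1,2) bounds(1) in_supp(3,4) bounds(2)]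
    by blast
qed

lemma is_aut_in_HN: "is_aut m \<sigma> \<Longrightarrow> f \<in> HN m \<Longrightarrow> \<sigma> f \<in> HN m"
  using bij_betw_apply[of \<sigma> "HN m" "HN m" f] by (simp add: is_aut_def)

lemma is_aut_add: "is_aut m \<sigma> \<Longrightarrow> f \<in> HN m \<Longrightarrow> g \<in> HN m \<Longrightarrow> \<sigma> (f + g) = \<sigma> f + \<sigma> g"
  unfolding is_aut_def by blast

lemma is_aut_scale: "is_aut m \<sigma> \<Longrightarrow> f \<in> HN m \<Longrightarrow> \<sigma> (\<lambda>s. c * f s) = (\<lambda>s. c * \<sigma> f s)"
  unfolding is_aut_def by blast

lemma is_aut_brk:
  "is_aut m \<sigma> \<Longrightarrow> f \<in> HN m \<Longrightarrow> g \<in> HN m \<Longrightarrow> \<sigma> (brk m f g) = brk m (\<sigma> f) (\<sigma> g)"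
  unfolding is_aut_def by blast

lemma is_aut_zero:
  assumes "is_aut m \<sigma>"
  shows "\<sigma> 0 = 0"
proof -
  have "\<sigma> (\<lambda>s. 0 * 0 s) = (\<lambda>s. 0 * \<sigma> 0 s)" using is_aut_scale[OF assms zero_in_HN] .
  then show ?thesis by (simp add: zero_fun_def)
qed

lemma is_aut_nonzero:
  assumes aut: "is_aut m \<sigma>" and "f \<in> HN m" "f \<noteq> 0"
  shows "\<sigma> f \<noteq> 0"
proof
  assume "\<sigma> f = 0"
  then have "\<sigma> f = \<sigma> 0" using is_aut_zero[OF aut] by simp
  moreover have "inj_on \<sigma> (HN m)" using aut by (simp add: is_aut_def bij_betw_def)
  ultimately show False using inj_onD zero_in_HN assms(2,3) by metis
qed

lemma is_aut_ad_ad_split_annihilated: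
  fixes \<sigma> :: "((nat \<Rightarrow> int) \<Rightarrow> 'k::field) \<Rightarrow> ((nat \<Rightarrow> int) \<Rightarrow> 'k)"
  assumes aut: "is_aut m \<sigma>" and r: "r \<in> lattice m - {0}" and v: "v \<in> lattice m - {0}"
  shows "split_annihilated (\<lambda>y. brk m (\<sigma> (hvec r)) (brk m (\<sigma> (hvec (- r))) y)) (hvec v)"
proof -
  have hr: "(hvec r :: _ \<Rightarrow> 'k) \<in> HN m" "(hvec (- r) :: _ \<Rightarrow> 'k) \<in> HN m"
    using r uminus_in_lattice[of r m] by (simp_all add: hvec_in_HN)
  have "hvec v \<in> \<sigma> ` HN m" using aut hvec_in_HN[OF v] by (simp add: is_aut_def bij_betw_def)
  then obtain w where w: "w \<in> HN m" "hvec v = \<sigma> w" by blast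
  have "split_annihilated (\<lambda>y. brk m (hvec r) (brk m (hvec (- r)) y)) w"
    by (rule split_annihilated_diagonal[OF brk_hvec_hvec_uminus]) (use w(1) in \<open>simp add: HN_iff\<close>)
  then show ?thesis
    unfolding w(2)
  proof (rule split_annihilated_transfer[where V = "HN m"])
    show "w \<in> HN m" by (rule w(1))
    fix y :: "(nat \<Rightarrow> int) \<Rightarrow> 'k"
    assume "y \<in> HN m"
    then show "brk m (hvec r) (brk m (hvec (- r)) y) \<in> HN m"
      and "\<sigma> (brk m (hvec r) (brk m (hvec (- r)) y))
        = brk m (\<sigma> (hvec r)) (brk m (\<sigma> (hvec (- r))) (\<sigma> y))"
      using hr is_aut_brk[OF aut] by (simp_all add: brk_in_HN)
  qed (use plus_in_HN scale_in_HN is_aut_add[OF aut] is_aut_scale[OF aut] in blast)+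
qed

lemma is_aut_image_line:
  fixes \<sigma> :: "((nat \<Rightarrow> int) \<Rightarrow> 'k::field) \<Rightarrow> ((nat \<Rightarrow> int) \<Rightarrow> 'k)"
  assumes aut: "is_aut m \<sigma>" and r: "r \<in> lattice m - {0}" and a: "supp (\<sigma> (hvec r)) = {a}"
  shows "\<sigma> ` line r = line a"
proof -
  define k where "k = \<sigma> (hvec r) a"
  have "k \<noteq> 0" using a by (auto simp: k_def supp_def)
  have "\<sigma> (hvec r) = (\<lambda>t. k * hvec a t)"
    using a by (auto simp: k_def supp_def hvec_def fun_eq_iff)
  moreover have "\<sigma> (\<lambda>t. c * hvec r t) = (\<lambda>t. c * \<sigma> (hvec r) t)" for c
    using is_aut_scale[OF aut hvec_in_HN[OF r]] .
  ultimately have image: "\<sigma> (\<lambda>t. c * hvec r t) = (\<lambda>t. (c * k) * hvec a t)" for c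
    by (simp add: mult.assoc)
  show ?thesis
  proof
    show "\<sigma> ` line r \<subseteq> line a" unfolding line_def using image by blast
    show "line a \<subseteq> \<sigma> ` line r"
    proof
      fix x :: "(nat \<Rightarrow> int) \<Rightarrow> 'k"
      assume "x \<in> line a"
      then obtain c where "x = (\<lambda>t. c * hvec a t)" unfolding line_def by blast
      then have "x = \<sigma> (\<lambda>t. (c / k) * hvec r t)" using image[of "c / k"] \<open>k \<noteq> 0\<close> by simp
      then show "x \<in> \<sigma> ` line r" unfolding line_def by blast
    qed
  qed
qed

theorem lemma3p2:
  fixes m :: nat and \<sigma> :: "((nat \<Rightarrow> int) \<Rightarrow> 'k::{alg_closed_field, field_char_0}) \<Rightarrow> ((nat \<Rightarrow> int) \<Rightarrow> 'k)"
  assumes "m \<ge> 1"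
    and "is_aut m \<sigma>"
    and "r \<in> lattice m - {0}"
  shows "\<exists>s\<in>lattice m - {0}. \<sigma> ` line r = line s \<and> \<sigma> ` line (- r) = line (- s)"
proof -
  have r': "- r \<in> lattice m - {0}" using assms(3) uminus_in_lattice by auto
  have HN: "\<sigma> (hvec r) \<in> HN m" "\<sigma> (hvec (- r)) \<in> HN m"
    using assms(2,3) r' hvec_in_HN is_aut_in_HN by blast+
  have "\<sigma> (hvec r) \<noteq> 0" "\<sigma> (hvec (- r)) \<noteq> 0"
    using assms(2,3) r' hvec_in_HN hvec_nonzero is_aut_nonzero by blast+
  then obtain a where a: "supp (\<sigma> (hvec r)) = {a}" "supp (\<sigma> (hvec (- r))) = {- a}"
    using ad_ad_split_annihilated_imp_opposite_monomials[OF HN]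
      is_aut_ad_ad_split_annihilated[OF assms(2,3)] by blast
  have "a \<in> lattice m - {0}" using HN(1) a(1) by (simp add: HN_iff)
  then show ?thesis using is_aut_image_line assms(2,3) r' a by blast
qed

end
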